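(* Let $p < q < r$ be primes such that $\{p, q, r\}$ is a symmetric triple. Then $q \leq \frac{3p-1}{2}$, and either $r = 2p-1$ or $q < r \leq \frac{3p-1}{2}$.
   Context: Two distinct primes $p$ and $q$ form a symmetric pair if $\gcd(p-1, q-1) = |p-q|$. A symmetric triple is a set of three primes such that any two of them form a symmetric pair. *)

theory Defs
  imports Complex_Main "HOL-Computational_Algebra.Primes"
begin

definition symmetric_pair :: "nat \<Rightarrow> nat \<Rightarrow> bool" where
  "symmetric_pair p q \<longleftrightarrow> prime p \<and> prime q \<and> p \<noteq> q \<and>
     int (gcd (p - 1) (q - 1)) = \<bar>int p - int q\<bar>"

definition symmetric_triple :: "nat set \<Rightarrow> bool" where
  "symmetric_triple S \<longleftrightarrow> card S = 3 \<and> (\<forall>p\<in>S. prime p) \<and>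
     (\<forall>p\<in>S. \<forall>q\<in>S. p \<noteq> q \<longrightarrow> symmetric_pair p q)"

end

theory Submission
  imports Defs
begin

text \<open>If \<open>p < q\<close> form a symmetric pair, then \<open>q - p\<close> divides \<open>p - 1\<close>, so either
  \<open>q - p = p - 1\<close> or \<open>q - p\<close> is a proper divisor of \<open>p - 1\<close>, i.e. at most \<open>(p - 1) / 2\<close>.
  In a symmetric triple \<open>p < q < r\<close> the first alternative can hold for at most the
  larger prime \<open>r\<close>, since \<open>q - p < r - p \<le> p - 1\<close>.\<close>

lemma symmetric_pair_gcd_eq:
  assumes "symmetric_pair p q" "p < q"
  shows "gcd (p - 1) (q - 1) = q - p"
  using assms unfolding symmetric_pair_def by linarith

lemma symmetric_pair_diff_dvd:
  assumes "symmetric_pair p q" "p < q"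
  shows "(q - p) dvd (p - 1)"
  by (metis symmetric_pair_gcd_eq[OF assms] gcd_dvd1)

lemma proper_divisor_double_le:
  fixes d n :: nat
  assumes "d dvd n" "d \<noteq> n" "0 < n"
  shows "2 * d \<le> n"
proof -
  obtain k where k: "n = d * k" using assms(1) by blast
  with assms have "k \<noteq> 0" "k \<noteq> 1" by auto
  then have "k \<ge> 2" by linarith
  with k show ?thesis by (metis mult.commute mult_le_mono2)
qed

lemma symmetric_pair_cases:
  assumes "symmetric_pair p q" "p < q"
  shows "q = 2 * p - 1 \<or> 2 * q \<le> 3 * p - 1"
proof -
  have "p \<ge> 2" using assms(1) prime_ge_2_nat unfolding symmetric_pair_def by blast
  with proper_divisor_double_le[OF symmetric_pair_diff_dvd[OF assms]] assms(2)
  show ?thesis by linarith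
qed

lemma symmetric_pair_le:
  assumes "symmetric_pair p q" "p < q"
  shows "q \<le> 2 * p - 1"
proof -
  have "p \<ge> 2" using assms(1) prime_ge_2_nat unfolding symmetric_pair_def by blast
  with dvd_imp_le[OF symmetric_pair_diff_dvd[OF assms]] assms(2) show ?thesis by linarith
qed

lemma symmetric_triple_pairs:
  assumes "symmetric_triple {p, q, r}" "p < q" "q < r"
  shows "symmetric_pair p q" "symmetric_pair p r"
  using assms unfolding symmetric_triple_def by auto

theorem corollary1:
  fixes p q r :: nat
  assumes "prime p" "prime q" "prime r" "p < q" "q < r"
    and "symmetric_triple {p, q, r}"
  shows "real q \<le> (3 * real p - 1) / 2 \<and>
         (r = 2 * p - 1 \<or> (q < r \<and> real r \<le> (3 * real p - 1) / 2))"
proof -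
  have pq: "symmetric_pair p q" and pr: "symmetric_pair p r"
    using symmetric_triple_pairs[OF assms(6,4,5)] by auto
  have "q \<noteq> 2 * p - 1"
    using symmetric_pair_le[OF pr] assms(4,5) by linarith
  then have q: "2 * q \<le> 3 * p - 1"
    using symmetric_pair_cases[OF pq assms(4)] by blast
  have r: "r = 2 * p - 1 \<or> 2 * r \<le> 3 * p - 1"
    using symmetric_pair_cases[OF pr] assms(4,5) by simp
  have real_bound: "real n \<le> (3 * real p - 1) / 2" if "2 * n \<le> 3 * p - 1" for n
  proof -
    from that have "real (2 * n) \<le> real (3 * p - 1)" by (simp only: of_nat_le_iff)
    with prime_ge_1_nat[OF assms(1)] show ?thesis by (simp add: of_nat_diff)
  qed
  show ?thesis using q r real_bound assms(5) by blast
qed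

end
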